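(* Let $\mathcal{E}_{\mathrm{train}}$ be a finite set of environments, $\mathcal{S}$ a state space, and for each $e\in\mathcal{E}_{\mathrm{train}}$ let $z^e:\mathcal{S}\to\mathbb{R}^k$ (the encoded observation $z^e(s)=\Phi(x^e(s))$). Let $Q$ be a distribution over action sequences $a$, and for each action sequence $a$ let $\rho_a$ be a distribution on $\mathcal{S}$ (the distribution of the state reached by executing $a$, which is the same in every environment). Let $\psi:\mathbb{R}^k\to\mathbb{R}^D$ satisfy $\|\psi(z)-\psi(z')\|_2\ge u\|z-z'\|_2$ for all $z,z'$, with $u>0$. Fix a batch size $B\ge1$. Draw $e,e'$ independently and uniformly from $\mathcal{E}_{\mathrm{train}}$, and independently for $b=1,\dots,B$ draw $a^b\sim Q$ and then $s^e_b\sim\rho_{a^b}$, $s^{e'}_b\sim\rho_{a^b}$ independently. Define $$L^{\mathrm{MMD}}=\mathbb{E}\Big[\Big\|\frac1B\sum_{b=1}^B\psi\big(z^e(s^e_b)\big)-\frac1B\sum_{b=1}^B\psi\big(z^{e'}(s^{e'}_b)\big)\Big\|_2^2\Big].$$ Then $$L^{\mathrm{MMD}}\ge\frac{u^2}{2B}\,\mathbb{E}_{e,e'\sim\mathrm{Unif}(\mathcal{E}_{\mathrm{train}}),\,a\sim Q,\,s\sim\rho_a}\big[\|z^e(s)-z^{e'}(s)\|_2^2\big].$$ In particular, if the right-hand expectation is at least $\delta$, then $L^{\mathrm{MMD}}\ge\frac{u^2\delta}{2B}$.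
   Context: All functions are assumed square-integrable so the expectations are finite. *)

theory Defs
  imports "HOL-Probability.Probability"
begin

definition state_dist :: "'a measure \<Rightarrow> ('a \<Rightarrow> 's measure) \<Rightarrow> 's measure" where
  "state_dist Q \<rho> = Q \<bind> \<rho>"

text \<open>Joint law of (s, s') for one batch element: draw a from Q, then s and s'
  independently from rho a (the states of the two environments e, e').\<close>
definition pair_state_dist ::
  "'a measure \<Rightarrow> ('a \<Rightarrow> 's measure) \<Rightarrow> 's measure \<Rightarrow> ('s \<times> 's) measure" where
  "pair_state_dist Q \<rho> S =
     Q \<bind> (\<lambda>a. \<rho> a \<bind> (\<lambda>s. \<rho> a \<bind> (\<lambda>s'. return (S \<Otimes>\<^sub>M S) (s, s'))))"

definition L_MMD ::
  "'e set \<Rightarrow> 'a measure \<Rightarrow> ('a \<Rightarrow> 's measure) \<Rightarrow> 's measure \<Rightarrow>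
   ('e \<Rightarrow> 's \<Rightarrow> 'k::euclidean_space) \<Rightarrow> ('k \<Rightarrow> 'd::euclidean_space) \<Rightarrow> nat \<Rightarrow> real" where
  "L_MMD E Q \<rho> S z \<psi> B =
     (1 / real (card E) ^ 2) *
     (\<Sum>e\<in>E. \<Sum>e'\<in>E.
        \<integral>\<omega>. (norm ((1 / real B) *\<^sub>R (\<Sum>b<B. \<psi> (z e (fst (\<omega> b))))
                     - (1 / real B) *\<^sub>R (\<Sum>b<B. \<psi> (z e' (snd (\<omega> b))))))\<^sup>2
        \<partial>(\<Pi>\<^sub>M b\<in>{..<B}. pair_state_dist Q \<rho> S))"

definition rhs_expect ::
  "'e set \<Rightarrow> 'a measure \<Rightarrow> ('a \<Rightarrow> 's measure) \<Rightarrow> ('e \<Rightarrow> 's \<Rightarrow> 'k::euclidean_space) \<Rightarrow> real" where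
  "rhs_expect E Q \<rho> z =
     (1 / real (card E) ^ 2) *
     (\<Sum>e\<in>E. \<Sum>e'\<in>E. \<integral>s. (norm (z e s - z e' s))\<^sup>2 \<partial>(state_dist Q \<rho>))"

end

theory Submission
  imports Defs
begin

text \<open>
  Fix environments e, e' and write X = psi(z^e(s)) - psi(z^e'(s')) for one batch element, where
  s and s' are drawn independently from rho_a given the action sequence a. The batch differences
  X_1, ..., X_B are i.i.d. copies of X, and in the expansion of the squared norm of their sum
  every cross term E<X_b, X_c> = |E X|^2 is nonnegative; hence the squared batch mean has
  expectation at least E|X|^2 / B >= u^2 E|z^e(s) - z^e'(s')|^2 / B. Replacing s' by s costs
  a factor 2: for square integrable F, G and i.i.d. x, y,
  E|F x - G x|^2 <= 2 E|F x - G y|^2, which after expanding both sides reads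
  4 <E F, E G> <= |E F + E G|^2 <= E|F + G|^2.
\<close>

lemma power2_norm_eq_sum_Basis:
  "(norm (x::'a::euclidean_space))\<^sup>2 = (\<Sum>i\<in>Basis. (x \<bullet> i)\<^sup>2)"
  unfolding power2_norm_eq_inner by (simp only: euclidean_inner[of x x] power2_eq_square)

lemma integral_PiM_component:
  fixes f :: "'a \<Rightarrow> 'b::{banach, second_countable_topology}"
  assumes M: "prob_space M" and [measurable]: "f \<in> borel_measurable M" and i: "i \<in> I"
  shows "integrable (\<Pi>\<^sub>M j\<in>I. M) (\<lambda>\<omega>. f (\<omega> i)) \<longleftrightarrow> integrable M f"
    and "(\<integral>\<omega>. f (\<omega> i) \<partial>(\<Pi>\<^sub>M j\<in>I. M)) = integral\<^sup>L M f"
  using integrable_distr_eq[of "\<lambda>\<omega>. \<omega> i" "\<Pi>\<^sub>M j\<in>I. M" M f]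
    integral_distr[of "\<lambda>\<omega>. \<omega> i" "\<Pi>\<^sub>M j\<in>I. M" M f]
  unfolding distr_PiM_component[of I "\<lambda>_. M", OF M i] using i by simp_all

lemma integral_PiM_two_components:
  fixes f g :: "'a \<Rightarrow> real"
  assumes M: "prob_space M" and f: "integrable M f" and g: "integrable M g"
    and I: "finite I" and ij: "i \<in> I" "j \<in> I" "i \<noteq> j"
  shows "integrable (\<Pi>\<^sub>M k\<in>I. M) (\<lambda>\<omega>. f (\<omega> i) * g (\<omega> j))"
    and "(\<integral>\<omega>. f (\<omega> i) * g (\<omega> j) \<partial>(\<Pi>\<^sub>M k\<in>I. M)) = integral\<^sup>L M f * integral\<^sup>L M g"
proof -
  interpret product_prob_space "\<lambda>_. M" I
    by (simp add: product_prob_space_def product_prob_space_axioms_def product_sigma_finite_def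
        prob_space_imp_sigma_finite M)
  define h where "h k = (if k = i then f else if k = j then g else (\<lambda>_. 1))" for k
  have h: "integrable M (h k)" for k
    using f g by (simp add: h_def)
  have h_split: "h k x = (if k = i then f x else 1) * (if k = j then g x else 1)" for k x
    using ij by (simp add: h_def)
  have prod_h: "(\<Prod>k\<in>I. h k (\<omega> k)) = f (\<omega> i) * g (\<omega> j)" for \<omega>
    using I ij by (simp add: h_split prod.distrib)
  show "integrable (\<Pi>\<^sub>M k\<in>I. M) (\<lambda>\<omega>. f (\<omega> i) * g (\<omega> j))"
    using product_integrable_prod[of I h, OF I h] by (simp add: prod_h)
  have "(\<integral>\<omega>. f (\<omega> i) * g (\<omega> j) \<partial>(\<Pi>\<^sub>M k\<in>I. M)) = (\<Prod>k\<in>I. integral\<^sup>L M (h k))"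
    using product_integral_prod[of I h, OF I h] by (simp add: prod_h)
  also have "\<dots> = (\<Prod>k\<in>I. (if k = i then integral\<^sup>L M f else 1) * (if k = j then integral\<^sup>L M g else 1))"
    using ij by (intro prod.cong) (auto simp: h_def prob_space.prob_space[OF M])
  also have "\<dots> = integral\<^sup>L M f * integral\<^sup>L M g"
    using I ij by (simp add: prod.distrib)
  finally show "(\<integral>\<omega>. f (\<omega> i) * g (\<omega> j) \<partial>(\<Pi>\<^sub>M k\<in>I. M)) = integral\<^sup>L M f * integral\<^sup>L M g" .
qed

lemma integral_PiM_iid_product:
  fixes h :: "'a \<Rightarrow> real"
  assumes M: "prob_space M" and [measurable]: "h \<in> borel_measurable M"
    and h2: "integrable M (\<lambda>x. (h x)\<^sup>2)" and I: "finite I" and bc: "b \<in> I" "c \<in> I"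
  shows "integrable (\<Pi>\<^sub>M k\<in>I. M) (\<lambda>\<omega>. h (\<omega> b) * h (\<omega> c))"
    and "(\<integral>\<omega>. h (\<omega> b) * h (\<omega> c) \<partial>(\<Pi>\<^sub>M k\<in>I. M))
      = (if b = c then \<integral>x. (h x)\<^sup>2 \<partial>M else (integral\<^sup>L M h)\<^sup>2)"
proof -
  have h: "integrable M h"
    by (rule finite_measure.square_integrable_imp_integrable[OF prob_space.axioms(1)[OF M]])
      (simp_all add: h2)
  have hh: "integrable M (\<lambda>x. h x * h x)"
    using h2 by (simp add: power2_eq_square)
  show "integrable (\<Pi>\<^sub>M k\<in>I. M) (\<lambda>\<omega>. h (\<omega> b) * h (\<omega> c))"
  proof (cases "b = c")
    case True
    then show ?thesis using integral_PiM_component(1)[OF M _ bc(1), of "\<lambda>x. h x * h x"] hh by simp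
  next
    case False
    then show ?thesis using integral_PiM_two_components(1)[OF M h h I bc] by simp
  qed
  show "(\<integral>\<omega>. h (\<omega> b) * h (\<omega> c) \<partial>(\<Pi>\<^sub>M k\<in>I. M))
      = (if b = c then \<integral>x. (h x)\<^sup>2 \<partial>M else (integral\<^sup>L M h)\<^sup>2)"
  proof (cases "b = c")
    case True
    then show ?thesis
      using integral_PiM_component(2)[OF M _ bc(1), of "\<lambda>x. h x * h x"] by (simp add: power2_eq_square)
  next
    case False
    then show ?thesis
      using integral_PiM_two_components(2)[OF M h h I bc] by (simp add: power2_eq_square)
  qed
qed

lemma integrable_iid_sum_square:
  fixes h :: "'a \<Rightarrow> real" and B :: nat
  assumes "prob_space M" "h \<in> borel_measurable M" "integrable M (\<lambda>x. (h x)\<^sup>2)"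
  shows "integrable (\<Pi>\<^sub>M b\<in>{..<B}. M) (\<lambda>\<omega>. (\<Sum>b<B. h (\<omega> b))\<^sup>2)"
  unfolding power2_eq_square sum_product
  by (intro Bochner_Integration.integrable_sum integral_PiM_iid_product(1)[OF assms]) auto

lemma integral_iid_sum_square_ge:
  fixes h :: "'a \<Rightarrow> real"
  assumes M: "prob_space M" and [measurable]: "h \<in> borel_measurable M"
    and h2: "integrable M (\<lambda>x. (h x)\<^sup>2)"
  shows "real B * (\<integral>x. (h x)\<^sup>2 \<partial>M) \<le> (\<integral>\<omega>. (\<Sum>b<B. h (\<omega> b))\<^sup>2 \<partial>(\<Pi>\<^sub>M b\<in>{..<B}. M))"
proof -
  let ?\<Omega> = "\<Pi>\<^sub>M b\<in>{..<B}. M"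
  note product = integral_PiM_iid_product[OF M _ h2 finite_lessThan[of B], simplified]
  have "(\<integral>\<omega>. (\<Sum>b<B. h (\<omega> b))\<^sup>2 \<partial>?\<Omega>) = (\<Sum>b<B. \<integral>\<omega>. (\<Sum>c<B. h (\<omega> b) * h (\<omega> c)) \<partial>?\<Omega>)"
    unfolding power2_eq_square sum_product
    by (intro Bochner_Integration.integral_sum Bochner_Integration.integrable_sum product(1)) auto
  also have "\<dots> = (\<Sum>b<B. \<Sum>c<B. \<integral>\<omega>. h (\<omega> b) * h (\<omega> c) \<partial>?\<Omega>)"
    by (intro sum.cong refl Bochner_Integration.integral_sum product(1)) auto
  also have "\<dots> = (\<Sum>b<B. \<Sum>c<B. if b = c then \<integral>x. (h x)\<^sup>2 \<partial>M else (integral\<^sup>L M h)\<^sup>2)"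
    using product by simp
  also have "\<dots> \<ge> (\<Sum>b<B. \<integral>x. (h x)\<^sup>2 \<partial>M)"
  proof (rule sum_mono)
    fix b assume "b \<in> {..<B}"
    then show "(\<integral>x. (h x)\<^sup>2 \<partial>M) \<le> (\<Sum>c<B. if b = c then \<integral>x. (h x)\<^sup>2 \<partial>M else (integral\<^sup>L M h)\<^sup>2)"
      by (simp add: sum.remove[of "{..<B}" b] sum_nonneg)
  qed
  finally show ?thesis by simp
qed

lemma integral_iid_sum_norm_square_ge:
  fixes X :: "'a \<Rightarrow> 'd::euclidean_space"
  assumes M: "prob_space M" and [measurable]: "X \<in> borel_measurable M"
    and X2: "integrable M (\<lambda>x. (norm (X x))\<^sup>2)"
  shows "real B * (\<integral>x. (norm (X x))\<^sup>2 \<partial>M)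
    \<le> (\<integral>\<omega>. (norm (\<Sum>b<B. X (\<omega> b)))\<^sup>2 \<partial>(\<Pi>\<^sub>M b\<in>{..<B}. M))"
proof -
  let ?\<Omega> = "\<Pi>\<^sub>M b\<in>{..<B}. M"
  have coord2: "integrable M (\<lambda>x. (X x \<bullet> i)\<^sup>2)" if "i \<in> Basis" for i
  proof (rule Bochner_Integration.integrable_bound[OF X2])
    have "(X x \<bullet> i)\<^sup>2 \<le> (norm (X x))\<^sup>2" for x
      using Basis_le_norm[OF that, of "X x"] by (simp add: abs_le_square_iff[symmetric])
    then show "AE x in M. norm ((X x \<bullet> i)\<^sup>2) \<le> norm ((norm (X x))\<^sup>2)"
      by simp
  qed measurable
  have "real B * (\<integral>x. (norm (X x))\<^sup>2 \<partial>M) = (\<Sum>i\<in>Basis. real B * (\<integral>x. (X x \<bullet> i)\<^sup>2 \<partial>M))"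
    by (simp add: power2_norm_eq_sum_Basis Bochner_Integration.integral_sum coord2 sum_distrib_left)
  also have "\<dots> \<le> (\<Sum>i\<in>Basis. \<integral>\<omega>. (\<Sum>b<B. X (\<omega> b) \<bullet> i)\<^sup>2 \<partial>?\<Omega>)"
    by (intro sum_mono integral_iid_sum_square_ge[OF M] coord2) simp_all
  also have "\<dots> = (\<integral>\<omega>. (norm (\<Sum>b<B. X (\<omega> b)))\<^sup>2 \<partial>?\<Omega>)"
    unfolding power2_norm_eq_sum_Basis inner_sum_left
    by (intro Bochner_Integration.integral_sum[symmetric] integrable_iid_sum_square[OF M _ coord2])
      simp_all
  finally show ?thesis .
qed

lemma power2_norm_diff_eq:
  "(norm (a - b))\<^sup>2 = (norm a)\<^sup>2 - 2 * (a \<bullet> b) + (norm (b::'a::real_inner))\<^sup>2"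
  by (simp add: power2_norm_eq_inner inner_diff_left inner_diff_right inner_commute)

lemma power2_norm_add_eq:
  "(norm (a + b))\<^sup>2 = (norm a)\<^sup>2 + 2 * (a \<bullet> b) + (norm (b::'a::real_inner))\<^sup>2"
  by (simp add: power2_norm_eq_inner inner_add_left inner_add_right inner_commute)

lemma square_norm_integrable_imp_integrable:
  fixes F :: "'a \<Rightarrow> 'b::{banach, second_countable_topology}"
  assumes "finite_measure M" "F \<in> borel_measurable M" "integrable M (\<lambda>x. (norm (F x))\<^sup>2)"
  shows "integrable M F"
  using finite_measure.square_integrable_imp_integrable[OF assms(1), of "\<lambda>x. norm (F x)"] assms
  by (simp add: integrable_norm_iff)

lemma integrable_inner_of_square_integrable:
  fixes F G :: "'a \<Rightarrow> 'b::euclidean_space"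
  assumes [measurable]: "F \<in> borel_measurable M" "G \<in> borel_measurable M"
    and "integrable M (\<lambda>x. (norm (F x))\<^sup>2)" "integrable M (\<lambda>x. (norm (G x))\<^sup>2)"
  shows "integrable M (\<lambda>x. F x \<bullet> G x)"
proof (rule Bochner_Integration.integrable_bound[of M "\<lambda>x. (norm (F x))\<^sup>2 + (norm (G x))\<^sup>2"])
  have "\<bar>F x \<bullet> G x\<bar> \<le> (norm (F x))\<^sup>2 + (norm (G x))\<^sup>2" for x
    using Cauchy_Schwarz_ineq2[of "F x" "G x"] sum_squares_bound[of "norm (F x)" "norm (G x)"]
    by (simp add: power2_eq_square)
  then show "AE x in M. norm (F x \<bullet> G x) \<le> norm ((norm (F x))\<^sup>2 + (norm (G x))\<^sup>2)"
    by simp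
qed (use assms in auto)

lemma power2_norm_integral_le:
  fixes F :: "'a \<Rightarrow> 'b::euclidean_space"
  assumes M: "prob_space M" and [measurable]: "F \<in> borel_measurable M"
    and F2: "integrable M (\<lambda>x. (norm (F x))\<^sup>2)"
  shows "(norm (integral\<^sup>L M F))\<^sup>2 \<le> (\<integral>x. (norm (F x))\<^sup>2 \<partial>M)"
proof -
  have "integrable M (\<lambda>x. norm (F x))"
    using square_norm_integrable_imp_integrable[OF prob_space.axioms(1)[OF M] _ F2] by simp
  then have "(\<integral>x. norm (F x) \<partial>M)\<^sup>2 \<le> (\<integral>x. (norm (F x))\<^sup>2 \<partial>M)"
    using prob_space.variance_eq[OF M _ F2] prob_space.variance_positive[OF M, of "\<lambda>x. norm (F x)"]
    by simp
  moreover have "norm (integral\<^sup>L M F) \<le> (\<integral>x. norm (F x) \<partial>M)"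
    by (rule integral_norm_bound)
  ultimately show ?thesis
    by (meson norm_ge_zero order_trans power_mono)
qed

lemma integral_norm_diff_le_decoupled:
  fixes F G :: "'a \<Rightarrow> 'b::euclidean_space"
  assumes M: "prob_space M" and [measurable]: "F \<in> borel_measurable M" "G \<in> borel_measurable M"
    and F2: "integrable M (\<lambda>x. (norm (F x))\<^sup>2)" and G2: "integrable M (\<lambda>x. (norm (G x))\<^sup>2)"
  shows "(\<integral>x. (norm (F x - G x))\<^sup>2 \<partial>M)
    \<le> 2 * ((\<integral>x. (norm (F x))\<^sup>2 \<partial>M) - 2 * (integral\<^sup>L M F \<bullet> integral\<^sup>L M G) + (\<integral>x. (norm (G x))\<^sup>2 \<partial>M))"
proof -
  have fin: "finite_measure M" using M by (rule prob_space.axioms(1))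
  have F: "integrable M F"
    using square_norm_integrable_imp_integrable[OF fin _ F2] by simp
  have G: "integrable M G"
    using square_norm_integrable_imp_integrable[OF fin _ G2] by simp
  have FG: "integrable M (\<lambda>x. F x \<bullet> G x)"
    by (rule integrable_inner_of_square_integrable) (simp_all add: F2 G2)
  define mF mG where "mF = integral\<^sup>L M F" and "mG = integral\<^sup>L M G"
  define cF cG cFG where "cF = (\<integral>x. (norm (F x))\<^sup>2 \<partial>M)" and "cG = (\<integral>x. (norm (G x))\<^sup>2 \<partial>M)"
    and "cFG = (\<integral>x. F x \<bullet> G x \<partial>M)"
  have "4 * (mF \<bullet> mG) \<le> (norm (mF + mG))\<^sup>2"
    using power2_norm_diff_eq[of mF mG] power2_norm_add_eq[of mF mG] zero_le_power2[of "norm (mF - mG)"]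
    by linarith
  also have "\<dots> \<le> (\<integral>x. (norm (F x + G x))\<^sup>2 \<partial>M)"
    using power2_norm_integral_le[OF M, of "\<lambda>x. F x + G x"] F G F2 G2 FG
    by (simp add: mF_def mG_def power2_norm_add_eq)
  also have "\<dots> = cF + 2 * cFG + cG"
    using F2 G2 FG by (simp add: power2_norm_add_eq cF_def cG_def cFG_def)
  finally have "4 * (mF \<bullet> mG) \<le> cF + 2 * cFG + cG" .
  moreover have "(\<integral>x. (norm (F x - G x))\<^sup>2 \<partial>M) = cF - 2 * cFG + cG"
    using F2 G2 FG by (simp add: power2_norm_diff_eq cF_def cG_def cFG_def)
  ultimately show ?thesis
    unfolding mF_def[symmetric] mG_def[symmetric] cF_def[symmetric] cG_def[symmetric]
    by (simp add: algebra_simps)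
qed

lemma nn_integral_norm_diff_independent:
  fixes F G :: "'a \<Rightarrow> 'b::euclidean_space"
  assumes M: "prob_space M" and [measurable]: "F \<in> borel_measurable M" "G \<in> borel_measurable M"
    and F2: "integrable M (\<lambda>x. (norm (F x))\<^sup>2)" and G2: "integrable M (\<lambda>x. (norm (G x))\<^sup>2)"
  shows "(\<integral>\<^sup>+p. (norm (F (fst p) - G (snd p)))\<^sup>2 \<partial>(M \<Otimes>\<^sub>M M))
    = ennreal ((\<integral>x. (norm (F x))\<^sup>2 \<partial>M) - 2 * (integral\<^sup>L M F \<bullet> integral\<^sup>L M G) + (\<integral>x. (norm (G x))\<^sup>2 \<partial>M))"
proof -
  interpret prob_space M by (rule M)
  have F: "integrable M F"
    using square_norm_integrable_imp_integrable[OF finite_measure_axioms _ F2] by simp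
  have G: "integrable M G"
    using square_norm_integrable_imp_integrable[OF finite_measure_axioms _ G2] by simp
  have one: "measure M (space M) = 1"
    by (rule prob_space)
  define \<phi> where "\<phi> x = (norm (F x))\<^sup>2 - 2 * (F x \<bullet> integral\<^sup>L M G) + (\<integral>y. (norm (G y))\<^sup>2 \<partial>M)" for x
  have inner_int: "integrable M (\<lambda>y. (norm (F x - G y))\<^sup>2)" for x
    using G G2 by (simp add: power2_norm_diff_eq)
  have inner_eq: "(\<integral>y. (norm (F x - G y))\<^sup>2 \<partial>M) = \<phi> x" for x
    using G G2 by (simp add: power2_norm_diff_eq one \<phi>_def)
  have "(\<integral>\<^sup>+p. (norm (F (fst p) - G (snd p)))\<^sup>2 \<partial>(M \<Otimes>\<^sub>M M)) = (\<integral>\<^sup>+x. \<integral>\<^sup>+y. (norm (F x - G y))\<^sup>2 \<partial>M \<partial>M)"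
    by (subst sigma_finite_measure.nn_integral_fst[OF prob_space_imp_sigma_finite[OF M], symmetric])
      simp_all
  also have "\<dots> = (\<integral>\<^sup>+x. \<phi> x \<partial>M)"
    using nn_integral_eq_integral[OF inner_int] inner_eq by simp
  also have "\<dots> = ennreal (integral\<^sup>L M \<phi>)"
    using F F2 integral_nonneg_AE[of "\<lambda>y. (norm (F _ - G y))\<^sup>2" M] inner_eq
    by (intro nn_integral_eq_integral) (auto simp: \<phi>_def)
  finally show ?thesis
    using F F2 by (simp add: one \<phi>_def[abs_def])
qed

lemma nn_integral_norm_diff_le_independent:
  fixes F G :: "'a \<Rightarrow> 'b::euclidean_space"
  assumes M: "prob_space M" and [measurable]: "F \<in> borel_measurable M" "G \<in> borel_measurable M"
    and F2: "integrable M (\<lambda>x. (norm (F x))\<^sup>2)" and G2: "integrable M (\<lambda>x. (norm (G x))\<^sup>2)"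
  shows "(\<integral>\<^sup>+x. (norm (F x - G x))\<^sup>2 \<partial>M) \<le> 2 * (\<integral>\<^sup>+p. (norm (F (fst p) - G (snd p)))\<^sup>2 \<partial>(M \<Otimes>\<^sub>M M))"
proof -
  have "integrable M (\<lambda>x. (norm (F x - G x))\<^sup>2)"
    using F2 G2 integrable_inner_of_square_integrable[of F M G] by (simp add: power2_norm_diff_eq)
  then have "(\<integral>\<^sup>+x. (norm (F x - G x))\<^sup>2 \<partial>M) = ennreal (\<integral>x. (norm (F x - G x))\<^sup>2 \<partial>M)"
    by (rule nn_integral_eq_integral) simp
  also have "\<dots> \<le> ennreal (2 * ((\<integral>x. (norm (F x))\<^sup>2 \<partial>M) - 2 * (integral\<^sup>L M F \<bullet> integral\<^sup>L M G)
      + (\<integral>x. (norm (G x))\<^sup>2 \<partial>M)))"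
    by (intro ennreal_leI integral_norm_diff_le_decoupled M F2 G2) simp_all
  also have "\<dots> = ennreal 2 * ennreal ((\<integral>x. (norm (F x))\<^sup>2 \<partial>M) - 2 * (integral\<^sup>L M F \<bullet> integral\<^sup>L M G)
      + (\<integral>x. (norm (G x))\<^sup>2 \<partial>M))"
    by (rule ennreal_mult') simp
  also have "\<dots> = 2 * (\<integral>\<^sup>+p. (norm (F (fst p) - G (snd p)))\<^sup>2 \<partial>(M \<Otimes>\<^sub>M M))"
    by (simp add: nn_integral_norm_diff_independent[OF M _ _ F2 G2])
  finally show ?thesis .
qed

locale state_kernel =
  fixes Q :: "'a measure" and \<rho> :: "'a \<Rightarrow> 's measure" and S :: "'s measure"
  assumes prob_space_Q: "prob_space Q"
    and measurable_\<rho>[measurable]: "\<rho> \<in> Q \<rightarrow>\<^sub>M prob_algebra S"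
begin

lemma
  assumes "a \<in> space Q"
  shows prob_space_\<rho>: "prob_space (\<rho> a)" and sets_\<rho>: "sets (\<rho> a) = sets S"
  using measurable_space[OF measurable_\<rho> assms] by (auto simp: space_prob_algebra)

lemma space_Q_not_empty: "space Q \<noteq> {}"
  by (rule prob_space.not_empty[OF prob_space_Q])

lemma subprob_kernel_\<rho>: "\<rho> \<in> Q \<rightarrow>\<^sub>M subprob_algebra S"
  by (rule measurable_prob_algebraD[OF measurable_\<rho>])

lemma subprob_kernel_pair: "(\<lambda>a. \<rho> a \<Otimes>\<^sub>M \<rho> a) \<in> Q \<rightarrow>\<^sub>M subprob_algebra (S \<Otimes>\<^sub>M S)"
  using measurable_pair_measure[OF subprob_kernel_\<rho> subprob_kernel_\<rho>] .

lemma pair_state_dist_eq_bind: "pair_state_dist Q \<rho> S = Q \<bind> (\<lambda>a. \<rho> a \<Otimes>\<^sub>M \<rho> a)"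
  unfolding pair_state_dist_def
proof (rule bind_cong[OF refl])
  fix a assume a: "a \<in> space Q"
  interpret pair_prob_space "\<rho> a" "\<rho> a"
    by (simp add: pair_prob_space_def pair_sigma_finite_def prob_space_\<rho>[OF a]
        prob_space_imp_sigma_finite)
  have "return (S \<Otimes>\<^sub>M S) = return (\<rho> a \<Otimes>\<^sub>M \<rho> a)"
    by (intro return_sets_cong sets_pair_measure_cong sets_\<rho>[OF a, symmetric])
  then show "\<rho> a \<bind> (\<lambda>s. \<rho> a \<bind> (\<lambda>s'. return (S \<Otimes>\<^sub>M S) (s, s'))) = \<rho> a \<Otimes>\<^sub>M \<rho> a"
    using pair_measure_eq_bind by simp
qed

lemma sets_state_dist[measurable_cong]: "sets (state_dist Q \<rho>) = sets S"
  unfolding state_dist_def using sets_\<rho> space_Q_not_empty by (rule sets_bind)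

lemma sets_pair_state_dist[measurable_cong]: "sets (pair_state_dist Q \<rho> S) = sets (S \<Otimes>\<^sub>M S)"
  unfolding pair_state_dist_eq_bind using space_Q_not_empty
  by (intro sets_bind sets_pair_measure_cong sets_\<rho>)

lemma prob_space_pair_state_dist: "prob_space (pair_state_dist Q \<rho> S)"
  unfolding pair_state_dist_eq_bind
  by (intro prob_space.prob_space_bind[OF prob_space_Q _ subprob_kernel_pair] AE_I2
      prob_space_pair prob_space_\<rho>)

lemma nn_integral_state_dist:
  assumes "f \<in> borel_measurable S"
  shows "(\<integral>\<^sup>+s. f s \<partial>state_dist Q \<rho>) = (\<integral>\<^sup>+a. \<integral>\<^sup>+s. f s \<partial>\<rho> a \<partial>Q)"
  unfolding state_dist_def using assms subprob_kernel_\<rho> by (rule nn_integral_bind)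

lemma nn_integral_pair_state_dist:
  assumes "f \<in> borel_measurable (S \<Otimes>\<^sub>M S)"
  shows "(\<integral>\<^sup>+p. f p \<partial>pair_state_dist Q \<rho> S) = (\<integral>\<^sup>+a. \<integral>\<^sup>+p. f p \<partial>(\<rho> a \<Otimes>\<^sub>M \<rho> a) \<partial>Q)"
  unfolding pair_state_dist_eq_bind using assms subprob_kernel_pair by (rule nn_integral_bind)

lemma nn_integral_pair_state_dist_fst:
  assumes [measurable]: "f \<in> borel_measurable S"
  shows "(\<integral>\<^sup>+p. f (fst p) \<partial>pair_state_dist Q \<rho> S) = (\<integral>\<^sup>+s. f s \<partial>state_dist Q \<rho>)"
proof -
  have "(\<integral>\<^sup>+p. f (fst p) \<partial>(\<rho> a \<Otimes>\<^sub>M \<rho> a)) = (\<integral>\<^sup>+s. f s \<partial>\<rho> a)" if a: "a \<in> space Q" for a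
  proof -
    have [measurable]: "f \<in> borel_measurable (\<rho> a)"
      unfolding measurable_cong_sets[OF sets_\<rho>[OF a] refl] by (rule assms)
    show ?thesis
      using sigma_finite_measure.nn_integral_fst[OF prob_space_imp_sigma_finite[OF prob_space_\<rho>[OF a]],
          of "\<lambda>p. f (fst p)" "\<rho> a"]
      by (simp add: prob_space.emeasure_space_1[OF prob_space_\<rho>[OF a]])
  qed
  then show ?thesis
    by (simp add: nn_integral_pair_state_dist nn_integral_state_dist cong: nn_integral_cong)
qed

lemma nn_integral_pair_state_dist_snd:
  assumes [measurable]: "f \<in> borel_measurable S"
  shows "(\<integral>\<^sup>+p. f (snd p) \<partial>pair_state_dist Q \<rho> S) = (\<integral>\<^sup>+s. f s \<partial>state_dist Q \<rho>)"
proof -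
  have "(\<integral>\<^sup>+p. f (snd p) \<partial>(\<rho> a \<Otimes>\<^sub>M \<rho> a)) = (\<integral>\<^sup>+s. f s \<partial>\<rho> a)" if a: "a \<in> space Q" for a
  proof -
    have [measurable]: "f \<in> borel_measurable (\<rho> a)"
      unfolding measurable_cong_sets[OF sets_\<rho>[OF a] refl] by (rule assms)
    show ?thesis
      using sigma_finite_measure.nn_integral_fst[OF prob_space_imp_sigma_finite[OF prob_space_\<rho>[OF a]],
          of "\<lambda>p. f (snd p)" "\<rho> a"]
      by (simp add: prob_space.emeasure_space_1[OF prob_space_\<rho>[OF a]])
  qed
  then show ?thesis
    by (simp add: nn_integral_pair_state_dist nn_integral_state_dist cong: nn_integral_cong)
qed

lemma integrable_pair_state_dist_fst:
  fixes f :: "'s \<Rightarrow> 'b::{banach, second_countable_topology}"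
  assumes [measurable]: "f \<in> borel_measurable S" and "integrable (state_dist Q \<rho>) f"
  shows "integrable (pair_state_dist Q \<rho> S) (\<lambda>p. f (fst p))"
proof -
  have norm_f: "(\<lambda>s. ennreal (norm (f s))) \<in> borel_measurable S"
    by measurable
  show ?thesis
    using assms(2) by (simp add: integrable_iff_bounded nn_integral_pair_state_dist_fst[OF norm_f])
qed

lemma integrable_pair_state_dist_snd:
  fixes f :: "'s \<Rightarrow> 'b::{banach, second_countable_topology}"
  assumes [measurable]: "f \<in> borel_measurable S" and "integrable (state_dist Q \<rho>) f"
  shows "integrable (pair_state_dist Q \<rho> S) (\<lambda>p. f (snd p))"
proof -
  have norm_f: "(\<lambda>s. ennreal (norm (f s))) \<in> borel_measurable S"
    by measurable
  show ?thesis
    using assms(2) by (simp add: integrable_iff_bounded nn_integral_pair_state_dist_snd[OF norm_f])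
qed

lemma AE_integrable_\<rho>:
  fixes f :: "'s \<Rightarrow> 'b::{banach, second_countable_topology}"
  assumes [measurable]: "f \<in> borel_measurable S" and "integrable (state_dist Q \<rho>) f"
  shows "AE a in Q. integrable (\<rho> a) f"
proof -
  have "(\<integral>\<^sup>+a. \<integral>\<^sup>+s. norm (f s) \<partial>\<rho> a \<partial>Q) \<noteq> \<infinity>"
    using assms(2) by (simp add: integrable_iff_bounded nn_integral_state_dist)
  then have "AE a in Q. (\<integral>\<^sup>+s. norm (f s) \<partial>\<rho> a) \<noteq> \<infinity>"
    by (intro nn_integral_PInf_AE nn_integral_measurable_subprob_algebra2[OF _ subprob_kernel_\<rho>])
      measurable
  then show ?thesis
  proof (rule AE_mp, intro AE_I2 impI)
    fix a assume a: "a \<in> space Q" and "(\<integral>\<^sup>+s. norm (f s) \<partial>\<rho> a) \<noteq> \<infinity>"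
    moreover have "f \<in> borel_measurable (\<rho> a)"
      unfolding measurable_cong_sets[OF sets_\<rho>[OF a] refl] by (rule assms)
    ultimately show "integrable (\<rho> a) f"
      by (simp add: integrable_iff_bounded top.not_eq_extremum)
  qed
qed

lemma integrable_pair_state_dist_norm_diff:
  fixes F G :: "'s \<Rightarrow> 'b::euclidean_space"
  assumes [measurable]: "F \<in> borel_measurable S" "G \<in> borel_measurable S"
    and F2: "integrable (state_dist Q \<rho>) (\<lambda>s. (norm (F s))\<^sup>2)"
    and G2: "integrable (state_dist Q \<rho>) (\<lambda>s. (norm (G s))\<^sup>2)"
  shows "integrable (pair_state_dist Q \<rho> S) (\<lambda>p. (norm (F (fst p) - G (snd p)))\<^sup>2)"
proof (rule Bochner_Integration.integrable_bound)
  show "integrable (pair_state_dist Q \<rho> S) (\<lambda>p. 2 * (norm (F (fst p)))\<^sup>2 + 2 * (norm (G (snd p)))\<^sup>2)"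
    using integrable_pair_state_dist_fst[OF _ F2] integrable_pair_state_dist_snd[OF _ G2] by simp
  have "(norm (a - b))\<^sup>2 \<le> 2 * (norm a)\<^sup>2 + 2 * (norm b)\<^sup>2" for a b :: 'b
    using power2_norm_diff_eq[of a b] power2_norm_add_eq[of a b] zero_le_power2[of "norm (a + b)"]
    by linarith
  then show "AE p in pair_state_dist Q \<rho> S. norm ((norm (F (fst p) - G (snd p)))\<^sup>2)
      \<le> norm (2 * (norm (F (fst p)))\<^sup>2 + 2 * (norm (G (snd p)))\<^sup>2)"
    by (intro AE_I2) simp
qed measurable

lemma integral_state_dist_norm_diff_le:
  fixes F G :: "'s \<Rightarrow> 'b::euclidean_space"
  assumes [measurable]: "F \<in> borel_measurable S" "G \<in> borel_measurable S"
    and F2: "integrable (state_dist Q \<rho>) (\<lambda>s. (norm (F s))\<^sup>2)"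
    and G2: "integrable (state_dist Q \<rho>) (\<lambda>s. (norm (G s))\<^sup>2)"
  shows "(\<integral>s. (norm (F s - G s))\<^sup>2 \<partial>state_dist Q \<rho>)
    \<le> 2 * (\<integral>p. (norm (F (fst p) - G (snd p)))\<^sup>2 \<partial>pair_state_dist Q \<rho> S)"
proof -
  have "AE a in Q. integrable (\<rho> a) (\<lambda>s. (norm (F s))\<^sup>2)"
    "AE a in Q. integrable (\<rho> a) (\<lambda>s. (norm (G s))\<^sup>2)"
    by (rule AE_integrable_\<rho>[OF _ F2] AE_integrable_\<rho>[OF _ G2]; measurable)+
  with AE_space have decoupled: "AE a in Q. (\<integral>\<^sup>+s. (norm (F s - G s))\<^sup>2 \<partial>\<rho> a)
      \<le> 2 * (\<integral>\<^sup>+p. (norm (F (fst p) - G (snd p)))\<^sup>2 \<partial>(\<rho> a \<Otimes>\<^sub>M \<rho> a))"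
  proof eventually_elim
    case (elim a)
    then have a: "a \<in> space Q" by simp
    have [measurable]: "F \<in> borel_measurable (\<rho> a)" "G \<in> borel_measurable (\<rho> a)"
      unfolding measurable_cong_sets[OF sets_\<rho>[OF a] refl] by simp_all
    show ?case
      using elim by (intro nn_integral_norm_diff_le_independent prob_space_\<rho>[OF a]) simp_all
  qed
  have "(\<integral>\<^sup>+s. (norm (F s - G s))\<^sup>2 \<partial>state_dist Q \<rho>)
      = (\<integral>\<^sup>+a. \<integral>\<^sup>+s. (norm (F s - G s))\<^sup>2 \<partial>\<rho> a \<partial>Q)"
    by (rule nn_integral_state_dist) measurable
  also have "\<dots> \<le> (\<integral>\<^sup>+a. 2 * (\<integral>\<^sup>+p. (norm (F (fst p) - G (snd p)))\<^sup>2 \<partial>(\<rho> a \<Otimes>\<^sub>M \<rho> a)) \<partial>Q)"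
    using decoupled by (rule nn_integral_mono_AE)
  also have "\<dots> = 2 * (\<integral>\<^sup>+p. (norm (F (fst p) - G (snd p)))\<^sup>2 \<partial>pair_state_dist Q \<rho> S)"
    by (subst nn_integral_cmult)
      (simp_all add: nn_integral_pair_state_dist
        nn_integral_measurable_subprob_algebra2[OF _ subprob_kernel_pair])
  also have "\<dots> = ennreal (2 * (\<integral>p. (norm (F (fst p) - G (snd p)))\<^sup>2 \<partial>pair_state_dist Q \<rho> S))"
    using nn_integral_eq_integral[OF integrable_pair_state_dist_norm_diff[OF _ _ F2 G2]]
    by (simp add: ennreal_mult')
  finally show ?thesis
    by (simp add: integral_eq_nn_integral enn2real_leI)
qed

lemma integral_batch_mean_diff_ge:
  fixes F G :: "'s \<Rightarrow> 'k::euclidean_space" and \<psi> :: "'k \<Rightarrow> 'd::euclidean_space" and B :: nat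
  assumes [measurable]: "F \<in> borel_measurable S" "G \<in> borel_measurable S" "\<psi> \<in> borel_measurable borel"
    and F2: "integrable (state_dist Q \<rho>) (\<lambda>s. (norm (F s))\<^sup>2)"
    and G2: "integrable (state_dist Q \<rho>) (\<lambda>s. (norm (G s))\<^sup>2)"
    and \<psi>F2: "integrable (state_dist Q \<rho>) (\<lambda>s. (norm (\<psi> (F s)))\<^sup>2)"
    and \<psi>G2: "integrable (state_dist Q \<rho>) (\<lambda>s. (norm (\<psi> (G s)))\<^sup>2)"
    and u: "0 \<le> u" and \<psi>_expanding: "\<And>x y. u * norm (x - y) \<le> norm (\<psi> x - \<psi> y)"
    and B: "B \<ge> 1"
  shows "u\<^sup>2 / (2 * real B) * (\<integral>s. (norm (F s - G s))\<^sup>2 \<partial>state_dist Q \<rho>)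
    \<le> (\<integral>\<omega>. (norm ((1 / real B) *\<^sub>R (\<Sum>b<B. \<psi> (F (fst (\<omega> b))))
                     - (1 / real B) *\<^sub>R (\<Sum>b<B. \<psi> (G (snd (\<omega> b))))))\<^sup>2
        \<partial>(\<Pi>\<^sub>M b\<in>{..<B}. pair_state_dist Q \<rho> S))"
proof -
  let ?P = "pair_state_dist Q \<rho> S" and ?\<Omega> = "\<Pi>\<^sub>M b\<in>{..<B}. pair_state_dist Q \<rho> S"
  define X where "X p = \<psi> (F (fst p)) - \<psi> (G (snd p))" for p
  have [measurable]: "X \<in> borel_measurable ?P"
    unfolding X_def[abs_def] by measurable
  have X2: "integrable ?P (\<lambda>p. (norm (X p))\<^sup>2)"
    unfolding X_def by (rule integrable_pair_state_dist_norm_diff[OF _ _ \<psi>F2 \<psi>G2]) measurable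
  have D2: "integrable ?P (\<lambda>p. (norm (F (fst p) - G (snd p)))\<^sup>2)"
    by (rule integrable_pair_state_dist_norm_diff[OF _ _ F2 G2]) measurable
  have pointwise: "u\<^sup>2 * (norm (F (fst p) - G (snd p)))\<^sup>2 \<le> (norm (X p))\<^sup>2" for p
    unfolding X_def power_mult_distrib[symmetric] using u by (intro power_mono \<psi>_expanding) simp
  have batch_mean: "(norm ((1 / real B) *\<^sub>R (\<Sum>b<B. \<psi> (F (fst (\<omega> b))))
                     - (1 / real B) *\<^sub>R (\<Sum>b<B. \<psi> (G (snd (\<omega> b))))))\<^sup>2
      = (1 / real B)\<^sup>2 * (norm (\<Sum>b<B. X (\<omega> b)))\<^sup>2" for \<omega>
    by (simp add: X_def scaleR_diff_right[symmetric] sum_subtractf power_mult_distrib power_divide)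
  have "u\<^sup>2 / (2 * real B) * (\<integral>s. (norm (F s - G s))\<^sup>2 \<partial>state_dist Q \<rho>)
      \<le> u\<^sup>2 / (2 * real B) * (2 * (\<integral>p. (norm (F (fst p) - G (snd p)))\<^sup>2 \<partial>?P))"
    by (intro mult_left_mono integral_state_dist_norm_diff_le F2 G2) simp_all
  also have "\<dots> = (1 / real B) * (\<integral>p. u\<^sup>2 * (norm (F (fst p) - G (snd p)))\<^sup>2 \<partial>?P)"
    by simp
  also have "\<dots> \<le> (1 / real B) * (\<integral>p. (norm (X p))\<^sup>2 \<partial>?P)"
    using D2 X2 pointwise by (intro mult_left_mono integral_mono) simp_all
  also have "\<dots> = (1 / real B)\<^sup>2 * (real B * (\<integral>p. (norm (X p))\<^sup>2 \<partial>?P))"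
    using B by (simp add: power2_eq_square)
  also have "\<dots> \<le> (1 / real B)\<^sup>2 * (\<integral>\<omega>. (norm (\<Sum>b<B. X (\<omega> b)))\<^sup>2 \<partial>?\<Omega>)"
    by (intro mult_left_mono integral_iid_sum_norm_square_ge prob_space_pair_state_dist X2) simp_all
  finally show ?thesis
    by (simp add: batch_mean)
qed

end

theorem proposition5:
  fixes E :: "'e set" and Q :: "'a measure" and \<rho> :: "'a \<Rightarrow> 's measure"
    and S :: "'s measure" and z :: "'e \<Rightarrow> 's \<Rightarrow> 'k::euclidean_space"
    and \<psi> :: "'k \<Rightarrow> 'd::euclidean_space" and u :: real and B :: nat
  assumes "finite E" and "E \<noteq> {}"
    and "prob_space Q"
    and "\<rho> \<in> Q \<rightarrow>\<^sub>M prob_algebra S"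
    and "\<And>e. e \<in> E \<Longrightarrow> z e \<in> borel_measurable S"
    and "\<psi> \<in> borel_measurable borel"
    and "\<And>e. e \<in> E \<Longrightarrow> integrable (state_dist Q \<rho>) (\<lambda>s. (norm (z e s))\<^sup>2)"
    and "\<And>e. e \<in> E \<Longrightarrow> integrable (state_dist Q \<rho>) (\<lambda>s. (norm (\<psi> (z e s)))\<^sup>2)"
    and "u > 0"
    and "\<And>x y. norm (\<psi> x - \<psi> y) \<ge> u * norm (x - y)"
    and "B \<ge> 1"
  shows "L_MMD E Q \<rho> S z \<psi> B \<ge> u\<^sup>2 / (2 * real B) * rhs_expect E Q \<rho> z
         \<and> (\<forall>\<delta>. rhs_expect E Q \<rho> z \<ge> \<delta> \<longrightarrow> L_MMD E Q \<rho> S z \<psi> B \<ge> u\<^sup>2 * \<delta> / (2 * real B))"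
proof -
  interpret state_kernel Q \<rho> S
    using assms(3,4) by (rule state_kernel.intro)
  have main: "u\<^sup>2 / (2 * real B) * rhs_expect E Q \<rho> z \<le> L_MMD E Q \<rho> S z \<psi> B"
    unfolding rhs_expect_def L_MMD_def sum_distrib_left mult.left_commute[of "u\<^sup>2 / (2 * real B)"]
    using assms by (intro mult_left_mono sum_mono integral_batch_mean_diff_ge) auto
  moreover have "u\<^sup>2 * \<delta> / (2 * real B) \<le> u\<^sup>2 / (2 * real B) * rhs_expect E Q \<rho> z"
    if "\<delta> \<le> rhs_expect E Q \<rho> z" for \<delta>
    using mult_left_mono[OF that, of "u\<^sup>2 / (2 * real B)"] by simp
  ultimately show ?thesis
    by fastforce
qed

end
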